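(* Let $(\Omega,\mathcal F,(\mathcal F_n)_{n\ge 0},\mathbb P)$ be a filtered probability space. Let $f,g:\{0,1,2,\ldots\}\to\mathbb R$ be non-decreasing functions with $-f(0)<g(0)$. (a) Let $(M_n)_{n\ge0}$ be a supermartingale with $M_n\ge -f(n)$ for all $n\ge 0$ and with $\mathbb E[M_0]\in[-f(0),g(0)]$. Then \[ \mathbb P\{\exists n\ge 0: M_n\ge g(n)\}\;\le\;1-\frac{g(0)-\mathbb E[M_0]}{g(0)+f(0)}\prod_{n=1}^\infty\frac{g(n)+f(n-1)}{g(n)+f(n)}. \] (b) For every $m\in[-f(0),g(0)]$ there exist a filtered probability space and a martingale $(M_n)_{n\ge0}$ on it with $M_n\ge -f(n)$ for all $n\ge 0$ and $\mathbb E[M_0]=m$ for which the inequality in (a) holds with equality.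
   Context: An adapted process $(M_n)_{n\ge0}$ is a supermartingale if $\mathbb E[|M_n|]<\infty$ and $\mathbb E[M_{n+1}\mid\mathcal F_n]\le M_n$ for all $n\ge 0$. *)

theory Defs
  imports "HOL-Probability.Probability"
begin

definition filtration_on :: "'a measure \<Rightarrow> (nat \<Rightarrow> 'a measure) \<Rightarrow> bool" where
  "filtration_on M F \<longleftrightarrow>
     (\<forall>n. subalgebra M (F n)) \<and> (\<forall>n m. n \<le> m \<longrightarrow> sets (F n) \<subseteq> sets (F m))"

definition supermartingale :: "'a measure \<Rightarrow> (nat \<Rightarrow> 'a measure) \<Rightarrow> (nat \<Rightarrow> 'a \<Rightarrow> real) \<Rightarrow> bool" where
  "supermartingale M F X \<longleftrightarrow>
     (\<forall>n. X n \<in> borel_measurable (F n)) \<and> (\<forall>n. integrable M (X n)) \<and>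
     (\<forall>n. AE x in M. real_cond_exp M (F n) (X (Suc n)) x \<le> X n x)"

definition martingale :: "'a measure \<Rightarrow> (nat \<Rightarrow> 'a measure) \<Rightarrow> (nat \<Rightarrow> 'a \<Rightarrow> real) \<Rightarrow> bool" where
  "martingale M F X \<longleftrightarrow>
     (\<forall>n. X n \<in> borel_measurable (F n)) \<and> (\<forall>n. integrable M (X n)) \<and>
     (\<forall>n. AE x in M. real_cond_exp M (F n) (X (Suc n)) x = X n x)"

text \<open>The infinite product \<Prod>_{n>=1} (g n + f (n-1)) / (g n + f n), as the limit of
  its partial products (the factors lie in (0,1], so the partial products decrease
  to a limit in [0,1], possibly 0).\<close>
definition ratio_prod :: "(nat \<Rightarrow> real) \<Rightarrow> (nat \<Rightarrow> real) \<Rightarrow> real" where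
  "ratio_prod f g = lim (\<lambda>N. \<Prod>n\<in>{1..N}. (g n + f (n - 1)) / (g n + f n))"

definition crossing_bound :: "(nat \<Rightarrow> real) \<Rightarrow> (nat \<Rightarrow> real) \<Rightarrow> real \<Rightarrow> real" where
  "crossing_bound f g e = 1 - (g 0 - e) / (g 0 + f 0) * ratio_prod f g"

end

theory Submission
  imports Defs
begin

text \<open>Write \<open>c n = \<Prod>k>n. (g k + f (k - 1)) / (g k + f k)\<close> (\<open>ratio_tail_prod\<close>) and
  \<open>V n x = 1 - (g n - x) * c n / (g n + f n)\<close> (\<open>hit_value\<close>). Then \<open>V n\<close> is affine,
  \<open>V n x \<ge> 1\<close> for \<open>x \<ge> g n\<close>, \<open>V n x \<ge> 0\<close> for \<open>x \<ge> - f n\<close>, and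
  \<open>V (n + 1) x \<le> V n x\<close> for \<open>x \<ge> - f n\<close>. Consequently the process that equals 1 once
  \<open>M\<close> has reached \<open>g\<close> and \<open>V n (M n)\<close> before is a supermartingale dominating the
  indicator of the event that \<open>M\<close> reached \<open>g\<close> by time \<open>n\<close>; its expectation is at most
  \<open>V 0 (E M 0)\<close>, which is the claimed bound.
  Equality holds for the martingale which at every time \<open>n\<close> either jumps up to \<open>g n\<close>
  and stays there, or sits at \<open>- f n\<close>; its jump probabilities are forced by the martingale
  property, and its probability of never jumping is \<open>(g 0 - m) / (g 0 + f 0) * c 0\<close>.\<close>

lemma filtration_on_space: "filtration_on M F \<Longrightarrow> space (F n) = space M"
  by (simp add: filtration_on_def subalgebra_def)

lemma filtration_on_sets: "filtration_on M F \<Longrightarrow> A \<in> sets (F n) \<Longrightarrow> A \<in> sets M"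
  by (auto simp: filtration_on_def subalgebra_def)

lemma filtration_on_measurable_mono:
  assumes "filtration_on M F" and "k \<le> n" and "X \<in> measurable (F k) N"
  shows "X \<in> measurable (F n) N"
proof -
  have "subalgebra (F n) (F k)"
    using assms(1,2) by (auto simp: filtration_on_def subalgebra_def)
  then show ?thesis using assms(3) by (rule measurable_from_subalg)
qed

lemma (in finite_measure) filtration_on_sigma_finite_subalgebra:
  "filtration_on M F \<Longrightarrow> sigma_finite_subalgebra M (F n)"
  by (intro finite_measure_subalgebra_is_sigma_finite)
    (simp add: filtration_on_def finite_measure_subalgebra_def
      finite_measure_subalgebra_axioms_def finite_measure_axioms)

lemma (in finite_measure) supermartingale_set_integral_Suc_le:
  assumes "filtration_on M F" and "supermartingale M F X" and "A \<in> sets (F n)"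
  shows "(\<integral>x\<in>A. X (Suc n) x \<partial>M) \<le> (\<integral>x\<in>A. X n x \<partial>M)"
proof -
  interpret sigma_finite_subalgebra M "F n"
    using assms(1) by (rule filtration_on_sigma_finite_subalgebra)
  have int: "integrable M (X k)" for k
    using assms(2) by (simp add: supermartingale_def)
  have "A \<in> sets M" using assms(1,3) by (rule filtration_on_sets)
  have set_int: "set_integrable M A h" if "integrable M h" for h :: "'a \<Rightarrow> real"
    using integrable_mult_indicator[OF \<open>A \<in> sets M\<close> that] by (simp add: set_integrable_def)
  have "(\<integral>x\<in>A. X (Suc n) x \<partial>M) = (\<integral>x\<in>A. real_cond_exp M (F n) (X (Suc n)) x \<partial>M)"
    using int assms(3) by (rule real_cond_exp_intA)
  also have "\<dots> \<le> (\<integral>x\<in>A. X n x \<partial>M)"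
    using assms(2) by (intro set_integral_mono_AE set_int int real_cond_exp_int(1))
      (auto simp: supermartingale_def elim!: allE[of _ n] eventually_mono)
  finally show ?thesis .
qed

lemma (in finite_measure) martingaleI_set_integral:
  assumes "filtration_on M F" and "\<And>n. X n \<in> borel_measurable (F n)"
    and "\<And>n. integrable M (X n)"
    and "\<And>n A. A \<in> sets (F n) \<Longrightarrow> (\<integral>x\<in>A. X (Suc n) x \<partial>M) = (\<integral>x\<in>A. X n x \<partial>M)"
  shows "martingale M F X"
  unfolding martingale_def
proof (intro conjI allI assms)
  fix n
  interpret sigma_finite_subalgebra M "F n"
    using assms(1) by (rule filtration_on_sigma_finite_subalgebra)
  show "AE x in M. real_cond_exp M (F n) (X (Suc n)) x = X n x"
    by (rule real_cond_exp_charact) (use assms in auto)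
qed

locale crossing_barriers =
  fixes f g :: "nat \<Rightarrow> real"
  assumes mono_f: "mono f" and mono_g: "mono g" and barriers_apart: "- f 0 < g 0"
begin

definition band_width :: "nat \<Rightarrow> real" where
  "band_width n = g n + f n"

definition step_ratio :: "nat \<Rightarrow> real" where
  "step_ratio n = (g n + f (n - 1)) / band_width n"

definition ratio_partial_prod :: "nat \<Rightarrow> real" where
  "ratio_partial_prod N = (\<Prod>n\<in>{1..N}. step_ratio n)"

definition ratio_tail_prod :: "nat \<Rightarrow> real" where
  "ratio_tail_prod n = ratio_prod f g / ratio_partial_prod n"

definition hit_slope :: "nat \<Rightarrow> real" where
  "hit_slope n = ratio_tail_prod n / band_width n"

definition hit_value :: "nat \<Rightarrow> real \<Rightarrow> real" where
  "hit_value n x = 1 - (g n - x) * hit_slope n"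

lemma band_width_pos: "0 < band_width n"
proof -
  have "f 0 \<le> f n" "g 0 \<le> g n" using mono_f mono_g by (auto simp: mono_def)
  then show ?thesis using barriers_apart by (simp add: band_width_def)
qed

lemma step_ratio_pos: "0 < step_ratio n"
proof -
  have "f 0 \<le> f (n - 1)" "g 0 \<le> g n" using mono_f mono_g by (auto simp: mono_def)
  then show ?thesis using barriers_apart band_width_pos[of n] by (simp add: step_ratio_def)
qed

lemma step_ratio_le_1: "step_ratio n \<le> 1"
proof -
  have "f (n - 1) \<le> f n" using mono_f by (auto simp: mono_def)
  then show ?thesis using band_width_pos[of n] by (simp add: step_ratio_def band_width_def)
qed

lemma ratio_partial_prod_pos: "0 < ratio_partial_prod N"
  unfolding ratio_partial_prod_def by (rule prod_pos) (use step_ratio_pos in auto)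

lemma ratio_partial_prod_0 [simp]: "ratio_partial_prod 0 = 1"
  by (simp add: ratio_partial_prod_def)

lemma ratio_partial_prod_Suc: "ratio_partial_prod (Suc N) = ratio_partial_prod N * step_ratio (Suc N)"
  by (simp add: ratio_partial_prod_def prod.nat_ivl_Suc')

lemma decseq_ratio_partial_prod: "decseq ratio_partial_prod"
proof (rule decseq_SucI)
  fix N
  show "ratio_partial_prod (Suc N) \<le> ratio_partial_prod N"
    using ratio_partial_prod_pos[of N] step_ratio_le_1[of "Suc N"]
    by (simp add: ratio_partial_prod_Suc mult_left_le)
qed

lemma ratio_partial_prod_LIMSEQ: "ratio_partial_prod \<longlonglongrightarrow> ratio_prod f g"
proof -
  obtain L where "ratio_partial_prod \<longlonglongrightarrow> L"
    using decseq_convergent[OF decseq_ratio_partial_prod, of 0] ratio_partial_prod_pos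
    by (meson less_imp_le)
  moreover have "ratio_prod f g = lim ratio_partial_prod"
    unfolding ratio_prod_def ratio_partial_prod_def step_ratio_def band_width_def ..
  ultimately show ?thesis by (metis limI)
qed

lemma ratio_prod_nonneg: "0 \<le> ratio_prod f g"
  using ratio_partial_prod_LIMSEQ ratio_partial_prod_pos by (meson LIMSEQ_le_const less_imp_le)

lemma ratio_prod_le_partial: "ratio_prod f g \<le> ratio_partial_prod N"
  using decseq_ge[OF decseq_ratio_partial_prod ratio_partial_prod_LIMSEQ] .

lemma ratio_tail_prod_nonneg: "0 \<le> ratio_tail_prod n"
  using ratio_prod_nonneg ratio_partial_prod_pos[of n] by (simp add: ratio_tail_prod_def)

lemma ratio_tail_prod_le_1: "ratio_tail_prod n \<le> 1"
  using ratio_prod_le_partial[of n] ratio_partial_prod_pos[of n] by (simp add: ratio_tail_prod_def)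

lemma ratio_tail_prod_Suc: "ratio_tail_prod n = step_ratio (Suc n) * ratio_tail_prod (Suc n)"
  using ratio_partial_prod_pos[of n] step_ratio_pos[of "Suc n"]
  by (simp add: ratio_tail_prod_def ratio_partial_prod_Suc)

lemma hit_slope_nonneg: "0 \<le> hit_slope n"
  using ratio_tail_prod_nonneg band_width_pos by (simp add: hit_slope_def less_imp_le)

lemma hit_value_diff: "hit_value n y - hit_value n x = hit_slope n * (y - x)"
  by (simp add: hit_value_def algebra_simps)

lemma hit_value_0: "hit_value 0 e = crossing_bound f g e"
  by (simp add: hit_value_def hit_slope_def ratio_tail_prod_def band_width_def crossing_bound_def)

lemma hit_value_ge_1: "g n \<le> x \<Longrightarrow> 1 \<le> hit_value n x"
  using hit_slope_nonneg[of n] by (simp add: hit_value_def mult_nonpos_nonneg)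

lemma hit_value_nonneg:
  assumes "- f n \<le> x"
  shows "0 \<le> hit_value n x"
proof -
  have "(g n - x) / band_width n \<le> 1"
    using assms band_width_pos[of n] by (simp add: band_width_def)
  moreover have "0 \<le> ratio_tail_prod n" "ratio_tail_prod n \<le> 1"
    by (rule ratio_tail_prod_nonneg ratio_tail_prod_le_1)+
  ultimately have "(g n - x) / band_width n * ratio_tail_prod n \<le> 1"
    by (rule mult_le_one)
  then show ?thesis by (simp add: hit_value_def hit_slope_def)
qed

lemma hit_value_Suc_le:
  assumes "- f n \<le> x"
  shows "hit_value (Suc n) x \<le> hit_value n x"
proof -
  have width: "0 < band_width n" by (rule band_width_pos)
  have slope: "hit_slope n = hit_slope (Suc n) * (g (Suc n) + f n) / band_width n"
    using ratio_tail_prod_Suc[of n] by (simp add: hit_slope_def step_ratio_def)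
  have "0 \<le> (g (Suc n) - g n) * (f n + x)"
    using assms mono_g by (simp add: mono_def)
  then have "(g n - x) * (g (Suc n) + f n) \<le> (g (Suc n) - x) * band_width n"
    by (simp add: band_width_def algebra_simps)
  then have "(g n - x) * (g (Suc n) + f n) / band_width n \<le> g (Suc n) - x"
    using width by (simp add: divide_le_eq)
  then have "(g n - x) * (g (Suc n) + f n) / band_width n * hit_slope (Suc n)
      \<le> (g (Suc n) - x) * hit_slope (Suc n)"
    using hit_slope_nonneg by (rule mult_right_mono)
  moreover have "(g n - x) * hit_slope n
      = (g n - x) * (g (Suc n) + f n) / band_width n * hit_slope (Suc n)"
    by (simp add: slope)
  ultimately show ?thesis by (simp add: hit_value_def)
qed

end

locale barrier_supermartingale = crossing_barriers f g + prob_space M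
  for f g :: "nat \<Rightarrow> real" and M :: "'a measure" +
  fixes F :: "nat \<Rightarrow> 'a measure" and X :: "nat \<Rightarrow> 'a \<Rightarrow> real"
  assumes filtration: "filtration_on M F" and supermartingale: "supermartingale M F X"
    and above_lower_barrier: "\<And>n x. x \<in> space M \<Longrightarrow> - f n \<le> X n x"
begin

definition hit_by :: "nat \<Rightarrow> 'a set" where
  "hit_by n = {x \<in> space M. \<exists>k\<le>n. g k \<le> X k x}"

definition hit_process :: "nat \<Rightarrow> 'a \<Rightarrow> real" where
  "hit_process n x = (if x \<in> hit_by n then 1 else hit_value n (X n x))"

lemma integrable_X: "integrable M (X n)"
  using supermartingale by (simp add: supermartingale_def)

lemma integrable_hit_value: "integrable M (\<lambda>x. hit_value n (X n x))"
  using integrable_X[of n] by (simp add: hit_value_def)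

lemma integral_hit_value: "(\<integral>x. hit_value n (X n x) \<partial>M) = hit_value n (expectation (X n))"
  using integrable_X[of n] by (simp add: hit_value_def prob_space left_diff_distrib)

lemma measurable_X_filtration:
  assumes "k \<le> n"
  shows "X k \<in> borel_measurable (F n)"
proof (rule filtration_on_measurable_mono[OF filtration assms])
  show "X k \<in> borel_measurable (F k)"
    using supermartingale by (simp add: supermartingale_def)
qed

lemma hit_by_sets_filtration: "hit_by n \<in> sets (F n)"
proof -
  have "hit_by n = (\<Union>k\<in>{..n}. {x \<in> space (F n). g k \<le> X k x})"
    by (auto simp: hit_by_def filtration_on_space[OF filtration])
  also have "\<dots> \<in> sets (F n)"
  proof (intro sets.finite_UN)
    fix k assume "k \<in> {..n}"
    then have [measurable]: "X k \<in> borel_measurable (F n)"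
      by (simp add: measurable_X_filtration)
    show "{x \<in> space (F n). g k \<le> X k x} \<in> sets (F n)" by measurable
  qed auto
  finally show ?thesis .
qed

lemma hit_by_sets: "hit_by n \<in> sets M"
  using filtration hit_by_sets_filtration by (rule filtration_on_sets)

lemma integrable_indicator_hit_by: "integrable M (indicator (hit_by n) :: 'a \<Rightarrow> real)"
  using hit_by_sets by (simp add: emeasure_finite less_top[symmetric])

lemma integrable_hit_process: "integrable M (hit_process n)"
proof -
  have "hit_process n = (\<lambda>x. indicator (hit_by n) x
      + hit_value n (X n x) - hit_value n (X n x) * indicator (hit_by n) x)"
    by (auto simp: hit_process_def fun_eq_iff)
  then show ?thesis
    by (simp only:) (intro Bochner_Integration.integrable_diff Bochner_Integration.integrable_add
        integrable_real_mult_indicator integrable_indicator_hit_by integrable_hit_value hit_by_sets)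
qed

lemma indicator_hit_by_le_hit_process:
  "x \<in> space M \<Longrightarrow> indicator (hit_by n) x \<le> hit_process n x"
  using hit_value_nonneg above_lower_barrier by (simp add: hit_process_def)

lemma hit_process_0_le: "x \<in> space M \<Longrightarrow> hit_process 0 x \<le> hit_value 0 (X 0 x)"
  by (auto simp: hit_process_def hit_by_def hit_value_ge_1)

lemma hit_process_Suc_le:
  assumes x: "x \<in> space M"
  shows "hit_process (Suc n) x
    \<le> hit_process n x
      + hit_slope (Suc n) * (indicator (space M - hit_by n) x * (X (Suc n) x - X n x))"
proof (cases "x \<in> hit_by n")
  case True
  then have "x \<in> hit_by (Suc n)" by (auto simp: hit_by_def intro: le_SucI)
  then show ?thesis using True by (simp add: hit_process_def)
next
  case not_hit: False
  have "hit_process (Suc n) x \<le> hit_value (Suc n) (X (Suc n) x)"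
  proof (cases "x \<in> hit_by (Suc n)")
    case True
    then have "g (Suc n) \<le> X (Suc n) x"
      using not_hit by (auto simp: hit_by_def le_Suc_eq)
    then show ?thesis using True by (simp add: hit_process_def hit_value_ge_1)
  qed (simp add: hit_process_def)
  also have "\<dots> = hit_value (Suc n) (X n x) + hit_slope (Suc n) * (X (Suc n) x - X n x)"
    using hit_value_diff[of "Suc n" "X (Suc n) x" "X n x"] by linarith
  also have "\<dots> \<le> hit_value n (X n x) + hit_slope (Suc n) * (X (Suc n) x - X n x)"
    using hit_value_Suc_le above_lower_barrier[OF x] by simp
  finally show ?thesis using x not_hit by (simp add: hit_process_def)
qed

lemma integral_hit_process_Suc_le:
  "(\<integral>x. hit_process (Suc n) x \<partial>M) \<le> (\<integral>x. hit_process n x \<partial>M)"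
proof -
  define B where "B = space M - hit_by n"
  have B: "B \<in> sets (F n)"
    using hit_by_sets_filtration[of n] filtration_on_space[OF filtration, of n]
    unfolding B_def by (metis sets.compl_sets)
  have int_B: "integrable M (\<lambda>x. indicator B x * X k x)" for k
    using integrable_mult_indicator[OF filtration_on_sets[OF filtration B] integrable_X] by simp
  have "(\<integral>x. hit_process (Suc n) x \<partial>M)
      \<le> (\<integral>x. hit_process n x
          + hit_slope (Suc n) * (indicator B x * X (Suc n) x - indicator B x * X n x) \<partial>M)"
  proof (rule integral_mono)
    show "integrable M (\<lambda>x. hit_process n x
        + hit_slope (Suc n) * (indicator B x * X (Suc n) x - indicator B x * X n x))"
      by (intro Bochner_Integration.integrable_add integrable_mult_right
          Bochner_Integration.integrable_diff integrable_hit_process int_B)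
    show "hit_process (Suc n) x
        \<le> hit_process n x + hit_slope (Suc n) * (indicator B x * X (Suc n) x - indicator B x * X n x)"
      if "x \<in> space M" for x
      using hit_process_Suc_le[OF that] by (simp add: B_def right_diff_distrib)
  qed (rule integrable_hit_process)
  also have "\<dots> = (\<integral>x. hit_process n x \<partial>M)
      + hit_slope (Suc n) * ((\<integral>x\<in>B. X (Suc n) x \<partial>M) - (\<integral>x\<in>B. X n x \<partial>M))"
    using integrable_hit_process int_B by (simp add: set_lebesgue_integral_def)
  also have "\<dots> \<le> (\<integral>x. hit_process n x \<partial>M)"
    using supermartingale_set_integral_Suc_le[OF filtration supermartingale B] hit_slope_nonneg
    by (simp add: mult_nonneg_nonpos)
  finally show ?thesis .
qed

lemma prob_hit_by_le: "prob (hit_by n) \<le> crossing_bound f g (expectation (X 0))"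
proof -
  have "prob (hit_by n) = (\<integral>x. indicator (hit_by n) x \<partial>M)"
    using hit_by_sets by simp
  also have "\<dots> \<le> (\<integral>x. hit_process n x \<partial>M)"
    by (intro integral_mono integrable_indicator_hit_by integrable_hit_process
        indicator_hit_by_le_hit_process)
  also have "\<dots> \<le> (\<integral>x. hit_process 0 x \<partial>M)"
  proof (induction n)
    case (Suc n)
    then show ?case using integral_hit_process_Suc_le[of n] by linarith
  qed simp
  also have "\<dots> \<le> (\<integral>x. hit_value 0 (X 0 x) \<partial>M)"
    by (intro integral_mono integrable_hit_process integrable_hit_value hit_process_0_le)
  also have "\<dots> = hit_value 0 (expectation (X 0))"
    by (rule integral_hit_value)
  finally show ?thesis by (simp add: hit_value_0)
qed

lemma prob_hit_le:
  "prob {x \<in> space M. \<exists>n. g n \<le> X n x} \<le> crossing_bound f g (expectation (X 0))"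
proof -
  have "incseq hit_by"
    by (rule incseq_SucI) (auto simp: hit_by_def intro: le_SucI)
  then have "(\<lambda>n. prob (hit_by n)) \<longlonglongrightarrow> prob (\<Union>n. hit_by n)"
    using hit_by_sets by (intro Lim_measure_incseq) auto
  then have "prob (\<Union>n. hit_by n) \<le> crossing_bound f g (expectation (X 0))"
    by (rule LIMSEQ_le_const2) (use prob_hit_by_le in auto)
  moreover have "{x \<in> space M. \<exists>n. g n \<le> X n x} = (\<Union>n. hit_by n)"
    by (auto simp: hit_by_def)
  ultimately show ?thesis by simp
qed

end

text \<open>The extremal martingale lives on outcomes \<open>i :: nat\<close>: outcome \<open>i \<ge> 1\<close> means that it
  jumps to \<open>g (i - 1)\<close> at time \<open>i - 1\<close> and stays there, outcome \<open>0\<close> that it never jumps. At time \<open>n\<close> only the outcomes \<open>1, \<dots>, n + 1\<close> can be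
  told apart, which is what \<open>revealed n\<close> records.\<close>

definition revealed :: "nat \<Rightarrow> nat \<Rightarrow> nat" where
  "revealed n i = (if i \<in> {1..Suc n} then i else 0)"

definition extremal_filtration :: "nat \<Rightarrow> nat measure" where
  "extremal_filtration n = vimage_algebra UNIV (revealed n) (count_space UNIV)"

lemma sets_extremal_filtration: "sets (extremal_filtration n) = range (\<lambda>B. revealed n -` B)"
  unfolding extremal_filtration_def by (subst sets_vimage_algebra2) auto

lemma revealed_revealed: "n \<le> k \<Longrightarrow> revealed n (revealed k i) = revealed n i"
  by (auto simp: revealed_def)

lemma filtration_on_extremal_filtration: "filtration_on (measure_pmf p) extremal_filtration"
proof -
  have "sets (extremal_filtration n) \<subseteq> sets (extremal_filtration k)" if "n \<le> k" for n k
  proof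
    fix A assume "A \<in> sets (extremal_filtration n)"
    then obtain B where "A = revealed n -` B"
      by (auto simp: sets_extremal_filtration)
    also have "\<dots> = revealed k -` (revealed n -` B)"
      by (auto simp: revealed_revealed[OF that])
    finally show "A \<in> sets (extremal_filtration k)"
      unfolding sets_extremal_filtration by blast
  qed
  then show ?thesis
    by (auto simp: filtration_on_def subalgebra_def extremal_filtration_def)
qed

context crossing_barriers
begin

definition extremal_process :: "nat \<Rightarrow> nat \<Rightarrow> real" where
  "extremal_process n i = (if i \<in> {1..Suc n} then g (i - 1) else - f n)"

lemma extremal_process_ge: "- f n \<le> extremal_process n i"
proof -
  have "f 0 \<le> f n" "g 0 \<le> g (i - 1)" using mono_f mono_g by (auto simp: mono_def)
  then show ?thesis using barriers_apart by (simp add: extremal_process_def)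
qed

lemma extremal_process_Suc_eq:
  "i \<in> {1..Suc n} \<Longrightarrow> extremal_process (Suc n) i = extremal_process n i"
  by (simp add: extremal_process_def)

lemma extremal_process_measurable:
  "extremal_process n \<in> borel_measurable (extremal_filtration n)"
proof -
  have "(\<lambda>i. extremal_process n (revealed n i)) \<in> borel_measurable (extremal_filtration n)"
    unfolding extremal_filtration_def
    by (intro measurable_compose[OF measurable_vimage_algebra1]) auto
  moreover have "extremal_process n (revealed n i) = extremal_process n i" for i
    by (simp add: extremal_process_def revealed_def)
  ultimately show ?thesis by simp
qed

lemma integrable_extremal_process: "integrable (measure_pmf p) (extremal_process n)"
proof (rule measure_pmf.integrable_const_bound)
  show "AE i in measure_pmf p. norm (extremal_process n i) \<le> \<bar>f n\<bar> + (\<Sum>k\<le>n. \<bar>g k\<bar>)"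
  proof (rule AE_I2)
    fix i
    have "\<bar>g (i - 1)\<bar> \<le> (\<Sum>k\<le>n. \<bar>g k\<bar>)" if "i \<in> {1..Suc n}"
      using that by (intro member_le_sum) auto
    moreover have "0 \<le> (\<Sum>k\<le>n. \<bar>g k\<bar>)" by (simp add: sum_nonneg)
    ultimately show "norm (extremal_process n i) \<le> \<bar>f n\<bar> + (\<Sum>k\<le>n. \<bar>g k\<bar>)"
      by (auto simp: extremal_process_def simp del: atLeastAtMost_iff)
  qed
qed simp

context
  fixes m :: real
  assumes start: "m \<in> {- f 0..g 0}"
begin

text \<open>\<open>survival n\<close> is the probability of not having jumped by time \<open>n\<close>.\<close>

definition survival :: "nat \<Rightarrow> real" where
  "survival n = (g 0 - m) / band_width 0 * ratio_partial_prod n"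

definition extremal_weight :: "nat \<Rightarrow> real" where
  "extremal_weight i =
    (if i = 0 then survival 0 * ratio_prod f g
     else if i = 1 then 1 - survival 0
     else survival (i - 2) - survival (i - 1))"

definition extremal_pmf :: "nat pmf" where
  "extremal_pmf = embed_pmf extremal_weight"

lemma survival_0_nonneg: "0 \<le> survival 0"
  using start band_width_pos[of 0] by (simp add: survival_def)

lemma survival_0_le_1: "survival 0 \<le> 1"
  using start band_width_pos[of 0] by (simp add: survival_def band_width_def)

lemma survival_Suc: "survival (Suc n) = survival n * step_ratio (Suc n)"
  by (simp add: survival_def ratio_partial_prod_Suc)

lemma survival_Suc_le: "survival (Suc n) \<le> survival n"
proof -
  have "ratio_partial_prod (Suc n) \<le> ratio_partial_prod n"
    using decseq_ratio_partial_prod by (simp add: decseq_Suc_iff)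
  moreover have "0 \<le> (g 0 - m) / band_width 0"
    using survival_0_nonneg by (simp add: survival_def)
  ultimately show ?thesis
    unfolding survival_def by (rule mult_left_mono)
qed

lemma survival_LIMSEQ: "survival \<longlonglongrightarrow> survival 0 * ratio_prod f g"
proof -
  have "(\<lambda>n. (g 0 - m) / band_width 0 * ratio_partial_prod n)
      \<longlonglongrightarrow> (g 0 - m) / band_width 0 * ratio_prod f g"
    by (rule tendsto_mult_left[OF ratio_partial_prod_LIMSEQ])
  then show ?thesis unfolding survival_def by simp
qed

lemma extremal_weight_nonneg: "0 \<le> extremal_weight i"
proof -
  have "survival (i - 1) \<le> survival (i - 2)" if "2 \<le> i"
    using survival_Suc_le[of "i - 2"] that by (simp add: Suc_diff_Suc numeral_2_eq_2)
  moreover have "0 \<le> survival 0 * ratio_prod f g"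
    using survival_0_nonneg ratio_prod_nonneg by (rule mult_nonneg_nonneg)
  ultimately show ?thesis
    using survival_0_le_1 by (auto simp: extremal_weight_def)
qed

lemma extremal_weight_sums: "extremal_weight sums 1"
proof -
  have "(\<lambda>k. survival k - survival (Suc k)) sums (survival 0 - survival 0 * ratio_prod f g)"
    by (rule telescope_sums'[OF survival_LIMSEQ])
  then have "(\<lambda>k. extremal_weight (Suc (Suc k))) sums (survival 0 - extremal_weight 0)"
    by (simp add: extremal_weight_def)
  then have "(\<lambda>k. extremal_weight (Suc k))
      sums (survival 0 - extremal_weight 0 + extremal_weight (Suc 0))"
    by (rule iffD1[OF sums_Suc_iff[of "\<lambda>k. extremal_weight (Suc k)"]])
  then have "extremal_weight
      sums (survival 0 - extremal_weight 0 + extremal_weight (Suc 0) + extremal_weight 0)"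
    by (rule iffD1[OF sums_Suc_iff[of extremal_weight]])
  moreover have "survival 0 - extremal_weight 0 + extremal_weight (Suc 0) + extremal_weight 0 = 1"
    by (simp add: extremal_weight_def)
  ultimately show ?thesis by simp
qed

lemma pmf_extremal_pmf: "pmf extremal_pmf i = extremal_weight i"
  unfolding extremal_pmf_def
proof (rule pmf_embed_pmf)
  show "(\<integral>\<^sup>+i. ennreal (extremal_weight i) \<partial>count_space UNIV) = 1"
    using extremal_weight_sums extremal_weight_nonneg
    by (simp add: nn_integral_count_space_nat suminf_ennreal2 sums_summable
        sums_unique[symmetric])
qed (rule extremal_weight_nonneg)

lemma sum_extremal_weight: "(\<Sum>i\<in>{1..Suc n}. extremal_weight i) = 1 - survival n"
  by (induction n) (simp_all add: extremal_weight_def)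

lemma sum_extremal_jump_values:
  "(\<Sum>i\<in>{1..Suc n}. g (i - 1) * extremal_weight i) - f n * survival n = m"
proof (induction n)
  case 0
  have "survival 0 * band_width 0 = g 0 - m"
    using band_width_pos[of 0] by (simp add: survival_def)
  then show ?case by (simp add: extremal_weight_def band_width_def algebra_simps)
next
  case (Suc n)
  \<comment> \<open>the jump probability at time \<open>Suc n\<close> is exactly what keeps the mean at \<open>m\<close>\<close>
  have "survival (Suc n) * band_width (Suc n) = survival n * (g (Suc n) + f n)"
    using band_width_pos[of "Suc n"] by (simp add: survival_Suc step_ratio_def)
  then show ?case
    using Suc.IH by (simp add: extremal_weight_def band_width_def algebra_simps)
qed

lemma expectation_extremal_process:
  "measure_pmf.expectation extremal_pmf (extremal_process n) = m"
proof -
  have "measure_pmf.expectation extremal_pmf (\<lambda>i. extremal_process n i + f n)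
      = (\<Sum>i\<in>{1..Suc n}. (extremal_process n i + f n) * pmf extremal_pmf i)"
    by (rule integral_measure_pmf_real) (auto simp: extremal_process_def split: if_splits)
  also have "\<dots> = (\<Sum>i\<in>{1..Suc n}. g (i - 1) * extremal_weight i + f n * extremal_weight i)"
    by (intro sum.cong) (auto simp: extremal_process_def pmf_extremal_pmf algebra_simps)
  also have "\<dots> = (\<Sum>i\<in>{1..Suc n}. g (i - 1) * extremal_weight i)
      + f n * (\<Sum>i\<in>{1..Suc n}. extremal_weight i)"
    by (simp only: sum.distrib sum_distrib_left)
  also have "\<dots> = m + f n"
    using sum_extremal_jump_values[of n]
    by (simp only: sum_extremal_weight right_diff_distrib mult_1_right)
  finally show ?thesis
    using integrable_extremal_process by simp
qed

lemma martingale_extremal_process: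
  "martingale (measure_pmf extremal_pmf) extremal_filtration extremal_process"
proof (rule measure_pmf.martingaleI_set_integral)
  fix n and A :: "nat set"
  assume "A \<in> sets (extremal_filtration n)"
  then obtain B where A: "A = revealed n -` B"
    by (auto simp: sets_extremal_filtration)
  \<comment> \<open>\<open>A\<close> either contains or misses all outcomes not yet revealed, and only on those
    the process moves\<close>
  have moves: "indicator A i * extremal_process (Suc n) i - indicator A i * extremal_process n i
      = (if 0 \<in> B then extremal_process (Suc n) i - extremal_process n i else 0)" for i
    by (cases "i \<in> {1..Suc n}")
      (auto simp: A revealed_def indicator_def extremal_process_Suc_eq simp del: atLeastAtMost_iff)
  have int_A: "integrable extremal_pmf (\<lambda>i. indicator A i * extremal_process k i)" for k
    using integrable_mult_indicator[of A extremal_pmf "extremal_process k"]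
      integrable_extremal_process by simp
  have "(\<integral>i\<in>A. extremal_process (Suc n) i \<partial>extremal_pmf)
      - (\<integral>i\<in>A. extremal_process n i \<partial>extremal_pmf)
      = (\<integral>i. indicator A i * extremal_process (Suc n) i
          - indicator A i * extremal_process n i \<partial>extremal_pmf)"
    using int_A by (simp add: set_lebesgue_integral_def)
  also have "\<dots> = (if 0 \<in> B
      then (\<integral>i. extremal_process (Suc n) i - extremal_process n i \<partial>extremal_pmf) else 0)"
    by (cases "0 \<in> B") (simp_all only: moves if_True if_False integral_zero)
  also have "\<dots> = 0"
    using integrable_extremal_process expectation_extremal_process by simp
  finally show "(\<integral>i\<in>A. extremal_process (Suc n) i \<partial>extremal_pmf)
      = (\<integral>i\<in>A. extremal_process n i \<partial>extremal_pmf)"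
    by simp
qed (simp_all add: filtration_on_extremal_filtration extremal_process_measurable
      integrable_extremal_process)

lemma prob_extremal_hit:
  "measure_pmf.prob extremal_pmf {i. \<exists>n. g n \<le> extremal_process n i} = crossing_bound f g m"
proof -
  have "\<not> g n \<le> extremal_process n 0" for n
    using band_width_pos[of n] by (simp add: extremal_process_def band_width_def)
  moreover have "g (i - 1) \<le> extremal_process (i - 1) i" if "i \<noteq> 0" for i
    using that by (simp add: extremal_process_def)
  ultimately have "{i. \<exists>n. g n \<le> extremal_process n i} = UNIV - {0}"
    by auto
  then have "measure_pmf.prob extremal_pmf {i. \<exists>n. g n \<le> extremal_process n i}
      = 1 - pmf extremal_pmf 0"
    using measure_pmf.prob_compl[of "{0}" extremal_pmf] by (simp add: measure_pmf_single)
  also have "\<dots> = crossing_bound f g m"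
    by (simp add: pmf_extremal_pmf extremal_weight_def survival_def crossing_bound_def band_width_def)
  finally show ?thesis .
qed

end

end

lemma (in crossing_barriers) supermartingale_hit_prob_le:
  assumes "prob_space M" and "filtration_on M F" and "supermartingale M F X"
    and "\<forall>n. \<forall>x\<in>space M. - f n \<le> X n x"
  shows "measure M {x \<in> space M. \<exists>n. g n \<le> X n x}
    \<le> crossing_bound f g (integral\<^sup>L M (X 0))"
proof -
  interpret barrier_supermartingale f g M F X
    using assms
    by (intro barrier_supermartingale.intro barrier_supermartingale_axioms.intro
        crossing_barriers_axioms) auto
  show ?thesis by (rule prob_hit_le)
qed

lemma (in crossing_barriers) extremal_martingale_attains_bound:
  assumes m: "m \<in> {- f 0..g 0}"
  shows "\<exists>(M :: nat measure) F X. prob_space M \<and> filtration_on M F \<and> martingale M F X \<and>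
    (\<forall>n. \<forall>x\<in>space M. - f n \<le> X n x) \<and> integral\<^sup>L M (X 0) = m \<and>
    measure M {x \<in> space M. \<exists>n. g n \<le> X n x} = crossing_bound f g m"
  by (intro exI[of _ "measure_pmf (extremal_pmf m)"] exI[of _ extremal_filtration]
      exI[of _ extremal_process] conjI allI ballI)
    (simp_all add: prob_space_measure_pmf filtration_on_extremal_filtration extremal_process_ge
      martingale_extremal_process[OF m] expectation_extremal_process[OF m] prob_extremal_hit[OF m])

theorem theorem2:
  fixes f g :: "nat \<Rightarrow> real"
  assumes "mono f" and "mono g" and "- f 0 < g 0"
  shows
    "(\<forall>(M :: 'a measure) F X.
        prob_space M \<and> filtration_on M F \<and> supermartingale M F X \<and>
        (\<forall>n. \<forall>x\<in>space M. X n x \<ge> - f n) \<and>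
        integral\<^sup>L M (X 0) \<in> {- f 0 .. g 0}
      \<longrightarrow> measure M {x \<in> space M. \<exists>n. X n x \<ge> g n}
            \<le> crossing_bound f g (integral\<^sup>L M (X 0)))
   \<and>
    (\<forall>m \<in> {- f 0 .. g 0}. \<exists>(M :: nat measure) F X.
        prob_space M \<and> filtration_on M F \<and> martingale M F X \<and>
        (\<forall>n. \<forall>x\<in>space M. X n x \<ge> - f n) \<and>
        integral\<^sup>L M (X 0) = m \<and>
        measure M {x \<in> space M. \<exists>n. X n x \<ge> g n} = crossing_bound f g m)"
proof -
  interpret crossing_barriers f g
    using assms by (rule crossing_barriers.intro)
  show ?thesis
  proof (intro conjI allI impI ballI)
    fix M :: "'a measure" and F X
    assume "prob_space M \<and> filtration_on M F \<and> supermartingale M F X \<and>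
      (\<forall>n. \<forall>x\<in>space M. X n x \<ge> - f n) \<and> integral\<^sup>L M (X 0) \<in> {- f 0 .. g 0}"
    then show "measure M {x \<in> space M. \<exists>n. X n x \<ge> g n}
        \<le> crossing_bound f g (integral\<^sup>L M (X 0))"
      using supermartingale_hit_prob_le by blast
  qed (rule extremal_martingale_attains_bound)
qed

end
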